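(* For every level $t \in \mathcal{L}$ there exists a unique finite set $\{u_1, \ldots, u_n\} \subseteq \mathcal{L}_s$ of pairwise incomparable sublevels (i.e. with $\max(u_1,\ldots,u_n) \in \mathcal{L}_r$) such that $t =_{\mathcal{L}} \max(u_1, \ldots, u_n)$.
   Context: $\operatorname{imax}\colon \mathbb{N}\times\mathbb{N}\to\mathbb{N}$ is defined by $\operatorname{imax}(i,0)=0$ and $\operatorname{imax}(i,j+1)=\max(i,j+1)$. Levels are terms of the grammar $t ::= x \mid 0 \mid s(t) \mid \max(t,t) \mid \operatorname{imax}(t,t)$, with $x$ in a countable set of variables $\mathcal{X}$; $\mathcal{L}$ is the set of levels. A valuation is $\sigma\colon\mathcal{X}\to\mathbb{N}$; values are $[0]_\sigma=0$, $[x]_\sigma=\sigma(x)$, $[s(t)]_\sigma=[t]_\sigma+1$, $[\max(t_1,t_2)]_\sigma=\max([t_1]_\sigma,[t_2]_\sigma)$, $[\operatorname{imax}(t_1,t_2)]_\sigma=\operatorname{imax}([t_1]_\sigma,[t_2]_\sigma)$. Sublevels: for finite $E\subseteq\mathcal{X}$, $x\in\mathcal{X}$, $S\in\mathbb{N}$, $[A(E,x,S)]_\sigma$ is $0$ if some $y\in E$ has $\sigma(y)=0$ and $\sigma(x)+S$ otherwise; $[B(E,S)]_\sigma$ is $0$ if some $y\in E$ has $\sigma(y)=0$ and $S$ otherwise. $\mathcal{L}_s$ is the set of sublevels $A(E,x,S)$ with $x\in E$ and $B(E,S)$ with $S>0$. $\max$ of a finite family is evaluated pointwise (empty max has value $0$).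 $t_1\leqslant_{\mathcal{L}} t_2$ (resp. $=_{\mathcal{L}}$) means $[t_1]_\sigma\le[t_2]_\sigma$ (resp. $=$) for every valuation $\sigma$. Sublevels $u,v$ are incomparable if neither $u\leqslant_{\mathcal{L}} v$ nor $v\leqslant_{\mathcal{L}} u$. $\mathcal{L}_r$ (minimal representations) is the set of formal expressions $\max(u_1,\ldots,u_n)$ with $\{u_1,\ldots,u_n\}$ a finite set of pairwise incomparable elements of $\mathcal{L}_s$. *)

theory Defs
  imports Main
begin

type_synonym var = nat
type_synonym valuation = "var \<Rightarrow> nat"

definition imax :: "nat \<Rightarrow> nat \<Rightarrow> nat" where
  "imax i j = (if j = 0 then 0 else max i j)"

datatype level = LVar var | LZero | LSucc level | LMax level level | LIMax level level

fun lval :: "level \<Rightarrow> valuation \<Rightarrow> nat" where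
  "lval (LVar x) \<sigma> = \<sigma> x"
| "lval LZero \<sigma> = 0"
| "lval (LSucc t) \<sigma> = lval t \<sigma> + 1"
| "lval (LMax t1 t2) \<sigma> = max (lval t1 \<sigma>) (lval t2 \<sigma>)"
| "lval (LIMax t1 t2) \<sigma> = imax (lval t1 \<sigma>) (lval t2 \<sigma>)"

datatype sublevel = SA "var set" var nat | SB "var set" nat

fun sval :: "sublevel \<Rightarrow> valuation \<Rightarrow> nat" where
  "sval (SA E x S) \<sigma> = (if \<exists>y\<in>E. \<sigma> y = 0 then 0 else \<sigma> x + S)"
| "sval (SB E S) \<sigma> = (if \<exists>y\<in>E. \<sigma> y = 0 then 0 else S)"

fun in_Ls :: "sublevel \<Rightarrow> bool" where
  "in_Ls (SA E x S) = (finite E \<and> x \<in> E)"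
| "in_Ls (SB E S) = (finite E \<and> S > 0)"

definition sub_le :: "sublevel \<Rightarrow> sublevel \<Rightarrow> bool" where
  "sub_le u v = (\<forall>\<sigma>. sval u \<sigma> \<le> sval v \<sigma>)"

definition incomparable :: "sublevel \<Rightarrow> sublevel \<Rightarrow> bool" where
  "incomparable u v = (\<not> sub_le u v \<and> \<not> sub_le v u)"

definition maxval :: "sublevel set \<Rightarrow> valuation \<Rightarrow> nat" where
  "maxval U \<sigma> = Max (insert 0 ((\<lambda>u. sval u \<sigma>) ` U))"

definition in_Lr :: "sublevel set \<Rightarrow> bool" where
  "in_Lr U = (finite U \<and> (\<forall>u\<in>U. in_Ls u) \<and>
              (\<forall>u\<in>U. \<forall>v\<in>U. u \<noteq> v \<longrightarrow> incomparable u v))"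

end

theory Submission
  imports Defs
begin

(* Existence: by induction on the level, every level is the maximum of a finite family of
   sublevels; s(t) shifts every member of the family for t and adds B({},1), and imax(t1,t2)
   guards every member of the family for t1 by the variables of each member of the family for
   t2. A subfamily of minimal size with the same maximum is pairwise incomparable.
   Uniqueness: sublevels in L_s are join-prime. If u <= max V then u <= v for a single v in V,
   because one test valuation, large at the variable of u compared with every constant of V,
   already decides u <= v. Since a sublevel in L_s is determined by its values, two antichains
   with the same maximum dominate each other elementwise and hence coincide. *)

fun vars :: "sublevel \<Rightarrow> var set" where
  "vars (SA E x S) = E"
| "vars (SB E S) = E"

fun offset :: "sublevel \<Rightarrow> nat" where
  "offset (SA E x S) = S"
| "offset (SB E S) = S"

fun shift :: "sublevel \<Rightarrow> sublevel" where
  "shift (SA E x S) = SA E x (S + 1)"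
| "shift (SB E S) = SB E (S + 1)"

fun guard :: "var set \<Rightarrow> sublevel \<Rightarrow> sublevel" where
  "guard F (SA E x S) = SA (F \<union> E) x S"
| "guard F (SB E S) = SB (F \<union> E) S"

lemma in_Ls_shift: "in_Ls w \<Longrightarrow> in_Ls (shift w)"
  by (cases w) auto

lemma in_Ls_guard: "in_Ls w \<Longrightarrow> finite F \<Longrightarrow> in_Ls (guard F w)"
  by (cases w) auto

lemma finite_vars: "in_Ls w \<Longrightarrow> finite (vars w)"
  by (cases w) auto

lemma sval_eq_0_iff: "in_Ls w \<Longrightarrow> sval w \<sigma> = 0 \<longleftrightarrow> (\<exists>y\<in>vars w. \<sigma> y = 0)"
  by (cases w) auto

lemma sval_shift: "sval w \<sigma> \<noteq> 0 \<Longrightarrow> sval (shift w) \<sigma> = sval w \<sigma> + 1"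
  by (cases w) (auto split: if_splits)

lemma sval_shift_le: "sval (shift w) \<sigma> \<le> sval w \<sigma> + 1"
  by (cases w) auto

lemma sval_guard: "sval (guard F w) \<sigma> = (if \<exists>y\<in>F. \<sigma> y = 0 then 0 else sval w \<sigma>)"
  by (cases w) force+

lemma maxval_le_iff: "finite W \<Longrightarrow> maxval W \<sigma> \<le> n \<longleftrightarrow> (\<forall>w\<in>W. sval w \<sigma> \<le> n)"
  by (simp add: maxval_def)

lemma le_maxval_iff: "finite W \<Longrightarrow> n \<le> maxval W \<sigma> \<longleftrightarrow> n = 0 \<or> (\<exists>w\<in>W. n \<le> sval w \<sigma>)"
  by (auto simp: maxval_def Max_ge_iff)

lemma maxval_ge: "finite W \<Longrightarrow> w \<in> W \<Longrightarrow> sval w \<sigma> \<le> maxval W \<sigma>"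
  by (auto simp: le_maxval_iff)

lemma maxval_attained: "finite W \<Longrightarrow> maxval W \<sigma> \<noteq> 0 \<Longrightarrow> \<exists>w\<in>W. sval w \<sigma> = maxval W \<sigma>"
  using le_maxval_iff[of W "maxval W \<sigma>" \<sigma>] maxval_ge[of W _ \<sigma>] by (auto intro: antisym)

lemma maxval_Un:
  assumes "finite V" "finite W"
  shows "maxval (V \<union> W) \<sigma> = max (maxval V \<sigma>) (maxval W \<sigma>)"
proof -
  have eq: "insert 0 ((\<lambda>u. sval u \<sigma>) ` (V \<union> W)) =
        insert 0 ((\<lambda>u. sval u \<sigma>) ` V) \<union> insert 0 ((\<lambda>u. sval u \<sigma>) ` W)"
    by auto
  show ?thesis
    unfolding maxval_def eq using assms by (intro Max_Un) simp_all
qed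

lemma maxval_shift:
  assumes W: "finite W"
  shows "maxval (insert (SB {} 1) (shift ` W)) \<sigma> = maxval W \<sigma> + 1"
proof (rule antisym)
  have "sval (shift w) \<sigma> \<le> maxval W \<sigma> + 1" if "w \<in> W" for w
    using sval_shift_le[of w \<sigma>] maxval_ge[OF W that, of \<sigma>] by linarith
  then show "maxval (insert (SB {} 1) (shift ` W)) \<sigma> \<le> maxval W \<sigma> + 1"
    using W by (simp add: maxval_le_iff)
  show "maxval W \<sigma> + 1 \<le> maxval (insert (SB {} 1) (shift ` W)) \<sigma>"
  proof (cases "maxval W \<sigma> = 0")
    case False
    then obtain w where w: "w \<in> W" "sval w \<sigma> = maxval W \<sigma>"
      using maxval_attained[OF W] by blast
    then have "maxval W \<sigma> + 1 \<le> sval (shift w) \<sigma>"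
      using False by (simp add: sval_shift)
    then show ?thesis
      using W w by (auto simp: le_maxval_iff)
  qed (use W in \<open>simp add: le_maxval_iff\<close>)
qed

lemma sval_guard_vars:
  "in_Ls v \<Longrightarrow> sval (guard (vars v) w) \<sigma> = (if sval v \<sigma> = 0 then 0 else sval w \<sigma>)"
  by (simp add: sval_guard sval_eq_0_iff)

lemma maxval_guard_vars:
  assumes V: "finite V" "\<forall>v\<in>V. in_Ls v" and W: "finite W"
  shows "maxval ((\<lambda>(w, v). guard (vars v) w) ` (W \<times> V)) \<sigma> =
         (if maxval V \<sigma> = 0 then 0 else maxval W \<sigma>)"
proof (rule antisym)
  have "sval (guard (vars v) w) \<sigma> \<le> (if maxval V \<sigma> = 0 then 0 else maxval W \<sigma>)"
    if "w \<in> W" "v \<in> V" for w v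
    using that V W maxval_ge[OF V(1) \<open>v \<in> V\<close>, of \<sigma>] maxval_ge[OF W \<open>w \<in> W\<close>, of \<sigma>]
    by (simp add: sval_guard_vars)
  then show "maxval ((\<lambda>(w, v). guard (vars v) w) ` (W \<times> V)) \<sigma> \<le>
             (if maxval V \<sigma> = 0 then 0 else maxval W \<sigma>)"
    using V W by (auto simp: maxval_le_iff)
next
  show "(if maxval V \<sigma> = 0 then 0 else maxval W \<sigma>) \<le>
        maxval ((\<lambda>(w, v). guard (vars v) w) ` (W \<times> V)) \<sigma>"
  proof (cases "maxval V \<sigma> = 0 \<or> maxval W \<sigma> = 0")
    case False
    then obtain v w where v: "v \<in> V" "sval v \<sigma> = maxval V \<sigma>"
      and w: "w \<in> W" "sval w \<sigma> = maxval W \<sigma>"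
      using maxval_attained[OF V(1)] maxval_attained[OF W] by metis
    then have "(if maxval V \<sigma> = 0 then 0 else maxval W \<sigma>) = sval (guard (vars v) w) \<sigma>"
      using False V(2) by (simp add: sval_guard_vars)
    also have "\<dots> \<le> maxval ((\<lambda>(w, v). guard (vars v) w) ` (W \<times> V)) \<sigma>"
      using V W v w by (intro maxval_ge) force+
    finally show ?thesis .
  qed auto
qed

lemma maxval_imax:
  assumes "finite W1" "finite W2" "\<forall>w\<in>W2. in_Ls w"
  shows "maxval (W2 \<union> (\<lambda>(w1, w2). guard (vars w2) w1) ` (W1 \<times> W2)) \<sigma> =
         imax (maxval W1 \<sigma>) (maxval W2 \<sigma>)"
  using assms by (simp add: maxval_Un maxval_guard_vars imax_def max.commute)

lemma level_representable:
  "\<exists>W. finite W \<and> (\<forall>w\<in>W. in_Ls w) \<and> (\<forall>\<sigma>. lval t \<sigma> = maxval W \<sigma>)"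
proof (induction t)
  case (LVar x)
  show ?case
    by (rule exI[of _ "{SA {x} x 0}"]) (simp add: maxval_def)
next
  case LZero
  show ?case
    by (rule exI[of _ "{}"]) (simp add: maxval_def)
next
  case (LSucc t)
  then obtain W where "finite W" "\<forall>w\<in>W. in_Ls w" "\<forall>\<sigma>. lval t \<sigma> = maxval W \<sigma>"
    by blast
  then show ?case
    by (intro exI[of _ "insert (SB {} 1) (shift ` W)"])
      (simp add: in_Ls_shift maxval_shift[simplified])
next
  case (LMax t1 t2)
  then obtain W1 W2 where "finite W1" "\<forall>w\<in>W1. in_Ls w" "\<forall>\<sigma>. lval t1 \<sigma> = maxval W1 \<sigma>"
    and "finite W2" "\<forall>w\<in>W2. in_Ls w" "\<forall>\<sigma>. lval t2 \<sigma> = maxval W2 \<sigma>"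
    by blast
  then show ?case
    by (intro exI[of _ "W1 \<union> W2"]) (auto simp: maxval_Un)
next
  case (LIMax t1 t2)
  then obtain W1 W2 where "finite W1" "\<forall>w\<in>W1. in_Ls w" "\<forall>\<sigma>. lval t1 \<sigma> = maxval W1 \<sigma>"
    and "finite W2" "\<forall>w\<in>W2. in_Ls w" "\<forall>\<sigma>. lval t2 \<sigma> = maxval W2 \<sigma>"
    by blast
  then show ?case
    by (intro exI[of _ "W2 \<union> (\<lambda>(w1, w2). guard (vars w2) w1) ` (W1 \<times> W2)"])
      (auto simp: maxval_imax in_Ls_guard finite_vars)
qed

lemma maxval_Diff_dominated:
  assumes "finite U" "v \<in> U" "u \<noteq> v" "sub_le u v"
  shows "maxval (U - {u}) \<sigma> = maxval U \<sigma>"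
proof (rule antisym)
  show "maxval (U - {u}) \<sigma> \<le> maxval U \<sigma>"
    using assms(1) by (simp add: maxval_le_iff maxval_ge)
  have "sval u \<sigma> \<le> maxval (U - {u}) \<sigma>"
    using assms maxval_ge[of "U - {u}" v \<sigma>] by (auto simp: sub_le_def intro: le_trans)
  then show "maxval U \<sigma> \<le> maxval (U - {u}) \<sigma>"
    using assms(1) by (auto simp: maxval_le_iff intro: maxval_ge)
qed

lemma in_Lr_subfamily_exists:
  assumes W: "finite W" "\<forall>w\<in>W. in_Ls w"
  shows "\<exists>U\<subseteq>W. in_Lr U \<and> (\<forall>\<sigma>. maxval U \<sigma> = maxval W \<sigma>)"
proof -
  define P where "P U \<longleftrightarrow> U \<subseteq> W \<and> (\<forall>\<sigma>. maxval U \<sigma> = maxval W \<sigma>)" for U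
  obtain U where U: "P U" and min: "\<And>U'. P U' \<Longrightarrow> card U \<le> card U'"
    using ex_has_least_nat[of P W card] by (auto simp: P_def)
  have fin: "finite U"
    using U W(1) finite_subset by (auto simp: P_def)
  have "\<not> sub_le u v" if "u \<in> U" "v \<in> U" "u \<noteq> v" for u v
  proof
    assume "sub_le u v"
    then have "P (U - {u})"
      using U that fin maxval_Diff_dominated by (auto simp: P_def)
    then have "card U \<le> card (U - {u})"
      by (rule min)
    then show False
      using fin \<open>u \<in> U\<close> card_Diff1_less[of U u] by simp
  qed
  then have "in_Lr U"
    using U W fin by (auto simp: in_Lr_def incomparable_def P_def)
  then show ?thesis
    using U by (auto simp: P_def)
qed

lemma sub_le_trans: "sub_le u v \<Longrightarrow> sub_le v w \<Longrightarrow> sub_le u w"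
  unfolding sub_le_def using le_trans by blast

lemma vars_eq_zeroing_set:
  "in_Ls u \<Longrightarrow> vars u = {y. sval u (\<lambda>z. if z = y then 0 else 1) = 0}"
  by (cases u) auto

lemma sval_inj_on_Ls:
  assumes u: "in_Ls u" and v: "in_Ls v" and eq: "sval u = sval v"
  shows "u = v"
proof -
  have E: "vars u = vars v"
    using vars_eq_zeroing_set[OF u] vars_eq_zeroing_set[OF v] eq by simp
  have one: "sval u (\<lambda>_. 1) = sval v (\<lambda>_. 1)" and two: "sval u (\<lambda>_. 2) = sval v (\<lambda>_. 2)"
    using eq by simp_all
  show ?thesis
  proof (cases u; cases v)
    fix E x S E' x' S'
    assume [simp]: "u = SA E x S" "v = SA E' x' S'"
    have "sval u (\<lambda>z. if z = x then 2 else 1) = sval v (\<lambda>z. if z = x then 2 else 1)"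
      using eq by simp
    then show ?thesis
      using E one u v by (auto split: if_splits)
  qed (use E one two in auto)
qed

lemma sub_le_antisym: "in_Ls u \<Longrightarrow> in_Ls v \<Longrightarrow> sub_le u v \<Longrightarrow> sub_le v u \<Longrightarrow> u = v"
  by (rule sval_inj_on_Ls) (auto simp: sub_le_def fun_eq_iff intro: antisym)

fun test_val :: "nat \<Rightarrow> sublevel \<Rightarrow> valuation" where
  "test_val N (SA E x S) = (\<lambda>y. if y = x then N else if y \<in> E then 1 else 0)"
| "test_val N (SB E S) = (\<lambda>y. if y \<in> E then 1 else 0)"

lemma sval_test_val_pos: "in_Ls u \<Longrightarrow> 0 < N \<Longrightarrow> 0 < sval u (test_val N u)"
  by (cases u) auto

lemma sval_nonzero_vars: "sval v \<sigma> \<noteq> 0 \<Longrightarrow> y \<in> vars v \<Longrightarrow> \<sigma> y \<noteq> 0"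
  by (cases v) (auto split: if_splits)

lemma test_val_nonzero_vars: "in_Ls u \<Longrightarrow> test_val N u y \<noteq> 0 \<Longrightarrow> y \<in> vars u"
  by (cases u) (auto split: if_splits)

lemma vars_subset_if_sval_test_val:
  "in_Ls u \<Longrightarrow> sval v (test_val N u) \<noteq> 0 \<Longrightarrow> vars v \<subseteq> vars u"
  using sval_nonzero_vars test_val_nonzero_vars by blast

(* On test_val N (SA E x S) the sublevel SA E x S has value N + S; as N exceeds every
   offset + 1 of v, only v = SA E' x S' with E' \<subseteq> E and S \<le> S' can reach it. *)
lemma sub_le_iff_test_val:
  assumes u: "in_Ls u" and v: "in_Ls v" and N: "offset v + 1 < N"
  shows "sub_le u v \<longleftrightarrow> sval u (test_val N u) \<le> sval v (test_val N u)"
proof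
  assume le: "sval u (test_val N u) \<le> sval v (test_val N u)"
  then have nz: "sval v (test_val N u) \<noteq> 0"
    using sval_test_val_pos[OF u, of N] N by linarith
  have sub: "vars v \<subseteq> vars u"
    using vars_subset_if_sval_test_val[OF u nz] .
  show "sub_le u v"
  proof (cases u; cases v)
    fix E x S E' x' S'
    assume [simp]: "u = SA E x S" "v = SA E' x' S'"
    have "x' = x" "S \<le> S'"
      using le N nz sub v by (auto split: if_splits)
    then show ?thesis
      using sub by (fastforce simp: sub_le_def)
  next
    fix E S E' x' S'
    assume [simp]: "u = SB E S" "v = SA E' x' S'"
    have "S \<le> S' + 1"
      using le nz sub v by (auto split: if_splits)
    then show ?thesis
      using sub v by (fastforce simp: sub_le_def)
  qed (use le N nz sub in \<open>fastforce simp: sub_le_def split: if_splits\<close>)+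
qed (simp add: sub_le_def)

lemma sub_le_member_if_le_maxval:
  assumes u: "in_Ls u" and V: "finite V" "\<forall>v\<in>V. in_Ls v"
    and le: "\<forall>\<sigma>. sval u \<sigma> \<le> maxval V \<sigma>"
  shows "\<exists>v\<in>V. sub_le u v"
proof -
  define N where "N = Max (insert 0 (offset ` V)) + 2"
  have N: "offset v + 1 < N" if "v \<in> V" for v
    using V(1) that by (simp add: N_def less_Suc_eq_le)
  have "0 < sval u (test_val N u)"
    using sval_test_val_pos[OF u] by (simp add: N_def)
  moreover have "sval u (test_val N u) \<le> maxval V (test_val N u)"
    using le by blast
  ultimately obtain v where "v \<in> V" "sval u (test_val N u) \<le> sval v (test_val N u)"
    using le_maxval_iff[OF V(1)] by auto
  then show ?thesis
    using sub_le_iff_test_val[OF u _ N] V(2) by blast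
qed

lemma in_Lr_subset_if_maxval_eq:
  assumes U: "in_Lr U" and V: "in_Lr V" and eq: "\<forall>\<sigma>. maxval U \<sigma> = maxval V \<sigma>"
  shows "U \<subseteq> V"
proof
  fix u assume "u \<in> U"
  have fin: "finite U" "finite V" and Ls: "\<forall>w\<in>U. in_Ls w" "\<forall>w\<in>V. in_Ls w"
    using U V by (auto simp: in_Lr_def)
  obtain v where "v \<in> V" "sub_le u v"
    using sub_le_member_if_le_maxval[of u V] maxval_ge[OF fin(1) \<open>u \<in> U\<close>] eq fin Ls \<open>u \<in> U\<close>
    by metis
  moreover obtain u' where "u' \<in> U" "sub_le v u'"
    using sub_le_member_if_le_maxval[of v U] maxval_ge[OF fin(2) \<open>v \<in> V\<close>] eq fin Ls \<open>v \<in> V\<close>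
    by metis
  ultimately have "u' = u"
    using U \<open>u \<in> U\<close> sub_le_trans unfolding in_Lr_def incomparable_def by metis
  then have "u = v"
    using sub_le_antisym Ls \<open>u \<in> U\<close> \<open>v \<in> V\<close> \<open>sub_le u v\<close> \<open>sub_le v u'\<close> by blast
  then show "u \<in> V"
    using \<open>v \<in> V\<close> by simp
qed

theorem theorem35:
  shows "\<forall>t :: level. \<exists>!U. in_Lr U \<and> (\<forall>\<sigma>. lval t \<sigma> = maxval U \<sigma>)"
proof
  fix t :: level
  obtain W where W: "finite W" "\<forall>w\<in>W. in_Ls w" "\<forall>\<sigma>. lval t \<sigma> = maxval W \<sigma>"
    using level_representable by blast
  obtain U where U: "in_Lr U" "\<forall>\<sigma>. maxval U \<sigma> = maxval W \<sigma>"
    using in_Lr_subfamily_exists[OF W(1,2)] by blast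
  show "\<exists>!U. in_Lr U \<and> (\<forall>\<sigma>. lval t \<sigma> = maxval U \<sigma>)"
  proof (rule ex1I[of _ U])
    show "in_Lr U \<and> (\<forall>\<sigma>. lval t \<sigma> = maxval U \<sigma>)"
      using U W(3) by simp
  next
    fix V assume "in_Lr V \<and> (\<forall>\<sigma>. lval t \<sigma> = maxval V \<sigma>)"
    then show "V = U"
      using U W(3) in_Lr_subset_if_maxval_eq by (metis subset_antisym)
  qed
qed

end
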